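(* Let $B\colon\mathbf{Set}\to\mathbf{Set}$ be a functor, $\Lambda$ a set and $(\tau_\lambda\colon B\mathbb{R}\to\mathbb{R})_{\lambda\in\Lambda}$ functions such that, for every set $Y$: (1) if $k\colon Y\to\mathbb{R}$ is bounded then $\tau_\lambda\circ Bk$ is bounded for each $\lambda$; (2) if $k_i\colon Y\to\mathbb{R}$ converges uniformly to $h$ then $\tau_\lambda\circ Bk_i$ converges uniformly to $\tau_\lambda\circ Bh$ for each $\lambda$. Let $X$ be a set and $S\subseteq\mathbf{Set}(X,\mathbb{R})$ such that every function in $S$ is bounded, the constant function $1$ is in $S$, and $S$ is closed under pointwise $\min$, $k\mapsto r+k$ and $k\mapsto rk$ for every $r\in\mathbb{R}$. Then $S$ is approximating: for every $h\colon X\to\mathbb{R}$ uniformly continuous w.r.t. $\mathscr{U}(S)$ and every $\lambda\in\Lambda$, the function $\tau_\lambda\circ Bh\colon BX\to\mathbb{R}$ is uniformly continuous w.r.t. the uniformity $\mathscr{U}(\{\tau_{\lambda'}\circ Bk\mid k\in S,\lambda'\in\Lambda\})$ on $BX$.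
   Context: For a set $Y$ and a family $F$ of functions $Y\to\mathbb{R}$, $\mathscr{U}(F)$ denotes the coarsest uniformity on $Y$ making every $f\in F$ uniformly continuous into $\mathbb{R}$ with the uniformity induced by the Euclidean metric. *)

theory Defs
  imports "HOL-Analysis.Analysis"
begin

text \<open>The coarsest uniformity on the carrier type making every f in F uniformly
  continuous into the reals (Euclidean uniformity), as a filter of entourages.
  For F empty this is the indiscrete uniformity (top filter).\<close>
definition unif_gen :: "('a \<Rightarrow> real) set \<Rightarrow> ('a \<times> 'a) filter" where
  "unif_gen F = (INF f\<in>F. INF e\<in>{0<..}. principal {p. \<bar>f (fst p) - f (snd p)\<bar> < e})"

definition ucont_wrt :: "('a \<times> 'a) filter \<Rightarrow> ('a \<Rightarrow> real) \<Rightarrow> bool" where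
  "ucont_wrt U h \<longleftrightarrow> (\<forall>e>0. eventually (\<lambda>p. \<bar>h (fst p) - h (snd p)\<bar> < e) U)"

text \<open>A functor from the full subcategory of Set on the two objects X (type 'x)
  and R (the reals) into Set, with BX = type 'bx and BR = type 'br.\<close>
definition set_functor2 ::
  "(('x \<Rightarrow> 'x) \<Rightarrow> 'bx \<Rightarrow> 'bx) \<Rightarrow> (('x \<Rightarrow> real) \<Rightarrow> 'bx \<Rightarrow> 'br) \<Rightarrow>
   ((real \<Rightarrow> 'x) \<Rightarrow> 'br \<Rightarrow> 'bx) \<Rightarrow> ((real \<Rightarrow> real) \<Rightarrow> 'br \<Rightarrow> 'br) \<Rightarrow> bool" where
  "set_functor2 BXX BXR BRX BRR \<longleftrightarrow>
     BXX id = id \<and> BRR id = id \<and>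
     (\<forall>f g. BXX (g \<circ> f) = BXX g \<circ> BXX f) \<and>
     (\<forall>f g. BXR (g \<circ> f) = BXR g \<circ> BXX f) \<and>
     (\<forall>f g. BXX (g \<circ> f) = BRX g \<circ> BXR f) \<and>
     (\<forall>f g. BXR (g \<circ> f) = BRR g \<circ> BXR f) \<and>
     (\<forall>f g. BRX (g \<circ> f) = BXX g \<circ> BRX f) \<and>
     (\<forall>f g. BRR (g \<circ> f) = BXR g \<circ> BRX f) \<and>
     (\<forall>f g. BRX (g \<circ> f) = BRX g \<circ> BRR f) \<and>
     (\<forall>f g. BRR (g \<circ> f) = BRR g \<circ> BRR f)"

end

theory Submission
  imports Defs
begin

text \<open>
  Every U(S)-uniformly continuous h is a uniform limit of members of S. The functions
  tau_l o B k with k in S are uniformly continuous for the generated uniformity, uniform continuity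
  passes to uniform limits, and tau_l o B(-) preserves them; so only the uniform-limit hypothesis
  on X is used.

  For the density: S consists of bounded functions, so U(S) is totally bounded (finitely many
  members of S, read with precision eta, take finitely many patterns of values), and h is bounded
  by some B. If max_(k in F) |k x - k y| < delta forces |h x - h y| < e, then for a fine enough
  finite net P the lattice expression min_(p in P) (h p + e + (2 B / delta) max_(k in F) |k - k p|)
  lies in S and is within 3 e of h.
\<close>

lemma eventually_unif_gen_finite_subset:
  "eventually P (unif_gen F) \<longleftrightarrow> (\<exists>G\<subseteq>F. finite G \<and> eventually P (unif_gen G))"
  unfolding unif_gen_def by (rule eventually_INF)

lemma eventually_unif_gen_finite:
  assumes "finite G"
  shows "eventually P (unif_gen G) \<longleftrightarrow>
    (\<exists>\<delta>>0. \<forall>x y. (\<forall>k\<in>G. \<bar>k x - k y\<bar> < \<delta>) \<longrightarrow> P (x, y))"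
  using assms
proof (induction G arbitrary: P rule: finite_induct)
  case empty
  then show ?case by (auto simp: unif_gen_def intro: exI[of _ 1])
next
  case (insert f G)
  let ?U = "INF e\<in>{0<..}. principal {p. \<bar>f (fst p) - f (snd p)\<bar> < e}"
  have eventually_U: "eventually Q ?U \<longleftrightarrow> (\<exists>\<delta>>0. \<forall>x y. \<bar>f x - f y\<bar> < \<delta> \<longrightarrow> Q (x, y))" for Q
    by (subst eventually_INF_base) (auto simp: eventually_principal intro: bexI[of _ "min _ _"])
  have unif_gen_insert: "unif_gen (insert f G) = inf ?U (unif_gen G)"
    by (simp add: unif_gen_def)
  show ?case
  proof
    assume "eventually P (unif_gen (insert f G))"
    then obtain Q R where "eventually Q ?U" and "eventually R (unif_gen G)"
      and QR: "\<forall>p. Q p \<and> R p \<longrightarrow> P p"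
      unfolding unif_gen_insert eventually_inf by blast
    then obtain \<delta>1 \<delta>2 where "\<delta>1 > 0" "\<forall>x y. \<bar>f x - f y\<bar> < \<delta>1 \<longrightarrow> Q (x, y)"
      and "\<delta>2 > 0" "\<forall>x y. (\<forall>k\<in>G. \<bar>k x - k y\<bar> < \<delta>2) \<longrightarrow> R (x, y)"
      unfolding eventually_U insert.IH by blast
    with QR show "\<exists>\<delta>>0. \<forall>x y. (\<forall>k\<in>insert f G. \<bar>k x - k y\<bar> < \<delta>) \<longrightarrow> P (x, y)"
      by (intro exI[of _ "min \<delta>1 \<delta>2"]) auto
  next
    assume "\<exists>\<delta>>0. \<forall>x y. (\<forall>k\<in>insert f G. \<bar>k x - k y\<bar> < \<delta>) \<longrightarrow> P (x, y)"
    then obtain \<delta> where "\<delta> > 0" and \<delta>P: "\<forall>x y. (\<forall>k\<in>insert f G. \<bar>k x - k y\<bar> < \<delta>) \<longrightarrow> P (x, y)"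
      by blast
    have "eventually (\<lambda>(x, y). \<bar>f x - f y\<bar> < \<delta>) ?U"
      using \<open>\<delta> > 0\<close> unfolding eventually_U by auto
    moreover have "eventually (\<lambda>(x, y). \<forall>k\<in>G. \<bar>k x - k y\<bar> < \<delta>) (unif_gen G)"
      using \<open>\<delta> > 0\<close> unfolding insert.IH by auto
    moreover have "\<forall>p. (\<lambda>(x, y). \<bar>f x - f y\<bar> < \<delta>) p \<and> (\<lambda>(x, y). \<forall>k\<in>G. \<bar>k x - k y\<bar> < \<delta>) p \<longrightarrow> P p"
      using \<delta>P by auto
    ultimately show "eventually P (unif_gen (insert f G))"
      unfolding unif_gen_insert eventually_inf by blast
  qed
qed

lemma ucont_wrt_unif_gen_iff:
  "ucont_wrt (unif_gen S) h \<longleftrightarrow>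
    (\<forall>e>0. \<exists>F\<subseteq>S. finite F \<and> (\<exists>\<delta>>0. \<forall>x y. (\<forall>k\<in>F. \<bar>k x - k y\<bar> < \<delta>) \<longrightarrow> \<bar>h x - h y\<bar> < e))"
proof -
  have "eventually (\<lambda>p. \<bar>h (fst p) - h (snd p)\<bar> < e) (unif_gen S) \<longleftrightarrow>
      (\<exists>F\<subseteq>S. finite F \<and> (\<exists>\<delta>>0. \<forall>x y. (\<forall>k\<in>F. \<bar>k x - k y\<bar> < \<delta>) \<longrightarrow> \<bar>h x - h y\<bar> < e))" for e
    by (subst eventually_unif_gen_finite_subset)
      (intro ex_cong1 conj_cong refl, simp add: eventually_unif_gen_finite)
  then show ?thesis
    by (simp add: ucont_wrt_def)
qed

lemma ucont_wrt_unif_gen_mem: "g \<in> S \<Longrightarrow> ucont_wrt (unif_gen S) g"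
  unfolding ucont_wrt_unif_gen_iff by (intro allI impI exI[of _ "{g}"]) auto

lemma ucont_wrt_uniform_limit:
  assumes "\<forall>\<^sub>F n in F. ucont_wrt U (f n)" and "uniform_limit UNIV f g F" and "F \<noteq> bot"
  shows "ucont_wrt U g"
  unfolding ucont_wrt_def
proof (intro allI impI)
  fix e :: real
  assume "e > 0"
  then have "\<forall>\<^sub>F n in F. ucont_wrt U (f n) \<and> (\<forall>x\<in>UNIV. dist (f n x) (g x) < e / 3)"
    by (intro eventually_conj assms(1) uniform_limitD[OF assms(2)]) simp
  then obtain n where ucont: "ucont_wrt U (f n)" and close: "\<forall>x. \<bar>f n x - g x\<bar> < e / 3"
    using assms(3) eventually_happens' by (fastforce simp: dist_real_def)
  have "\<forall>\<^sub>F p in U. \<bar>f n (fst p) - f n (snd p)\<bar> < e / 3"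
    using ucont \<open>e > 0\<close> unfolding ucont_wrt_def by (meson zero_less_divide_iff zero_less_numeral)
  then show "\<forall>\<^sub>F p in U. \<bar>g (fst p) - g (snd p)\<bar> < e"
  proof (rule eventually_mono)
    fix p
    assume "\<bar>f n (fst p) - f n (snd p)\<bar> < e / 3"
    with close[rule_format, of "fst p"] close[rule_format, of "snd p"]
    show "\<bar>g (fst p) - g (snd p)\<bar> < e" by linarith
  qed
qed

lemma finite_floor_image:
  fixes A :: "real set"
  assumes "bounded A"
  shows "finite (floor ` A)"
proof -
  obtain B where B: "\<And>a. a \<in> A \<Longrightarrow> \<bar>a\<bar> \<le> B"
    using assms unfolding bounded_iff by auto
  have "floor ` A \<subseteq> {\<lfloor>-B\<rfloor>..\<lfloor>B\<rfloor>}"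
  proof
    fix z
    assume "z \<in> floor ` A"
    then obtain a where "a \<in> A" and "z = \<lfloor>a\<rfloor>"
      by blast
    moreover have "-B \<le> a" and "a \<le> B"
      using B[OF \<open>a \<in> A\<close>] by linarith+
    ultimately show "z \<in> {\<lfloor>-B\<rfloor>..\<lfloor>B\<rfloor>}"
      by (simp add: floor_mono)
  qed
  then show ?thesis
    by (rule finite_subset) simp
qed

lemma exists_finite_net:
  fixes F :: "('a \<Rightarrow> real) set"
  assumes "finite F" and bdd: "\<And>k. k \<in> F \<Longrightarrow> bounded (range k)" and "\<eta> > 0"
  obtains P where "finite P" and "\<And>x. \<exists>p\<in>P. \<forall>k\<in>F. \<bar>k x - k p\<bar> < \<eta>"
proof
  define c where "c x = restrict (\<lambda>k. \<lfloor>k x / \<eta>\<rfloor>) F" for x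
  have "finite (floor ` range (\<lambda>x. k x / \<eta>))" if "k \<in> F" for k
  proof (rule finite_floor_image)
    show "bounded (range (\<lambda>x. k x / \<eta>))"
      using bounded_scaling[OF bdd[OF that], of "inverse \<eta>"]
      by (simp add: image_image divide_inverse mult.commute)
  qed
  then have "finite (\<Pi>\<^sub>E k\<in>F. floor ` range (\<lambda>x. k x / \<eta>))"
    by (rule finite_PiE[OF assms(1)])
  moreover have "range c \<subseteq> (\<Pi>\<^sub>E k\<in>F. floor ` range (\<lambda>x. k x / \<eta>))"
    by (auto simp: c_def)
  ultimately have "finite (range c)"
    by (rule finite_subset[rotated])
  then show "finite (inv c ` range c)"
    by simp
  fix x
  define p where "p = inv c (c x)"
  have "c p = c x"
    by (simp add: p_def f_inv_into_f)
  have "\<bar>k x - k p\<bar> < \<eta>" if "k \<in> F" for k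
  proof -
    have "c x k = c p k"
      using \<open>c p = c x\<close> by simp
    then have "\<lfloor>k x / \<eta>\<rfloor> = \<lfloor>k p / \<eta>\<rfloor>"
      using that by (simp add: c_def)
    then have "\<bar>k x / \<eta> - k p / \<eta>\<bar> < 1"
      by (rule floor_eq_imp_diff_1)
    with \<open>\<eta> > 0\<close> show ?thesis
      by (simp add: abs_divide flip: diff_divide_distrib)
  qed
  then show "\<exists>p\<in>inv c ` range c. \<forall>k\<in>F. \<bar>k x - k p\<bar> < \<eta>"
    unfolding p_def by blast
qed

lemma bounded_range_if_ucont_wrt_unif_gen:
  assumes bdd: "\<And>k. k \<in> S \<Longrightarrow> bounded (range k)" and "ucont_wrt (unif_gen S) h"
  shows "bounded (range h)"
proof -
  have "\<exists>F\<subseteq>S. finite F \<and> (\<exists>\<delta>>0. \<forall>x y. (\<forall>k\<in>F. \<bar>k x - k y\<bar> < \<delta>) \<longrightarrow> \<bar>h x - h y\<bar> < 1)"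
    using assms(2) unfolding ucont_wrt_unif_gen_iff by simp
  then obtain F \<delta> where "F \<subseteq> S" "finite F" "\<delta> > 0"
    and F\<delta>: "\<And>x y. \<forall>k\<in>F. \<bar>k x - k y\<bar> < \<delta> \<Longrightarrow> \<bar>h x - h y\<bar> < 1"
    by blast
  obtain P where "finite P" and net: "\<And>x. \<exists>p\<in>P. \<forall>k\<in>F. \<bar>k x - k p\<bar> < \<delta>"
    using exists_finite_net[OF \<open>finite F\<close> _ \<open>\<delta> > 0\<close>] bdd \<open>F \<subseteq> S\<close> by blast
  have "bounded (\<Union>p\<in>P. cball (h p) 1)"
    using \<open>finite P\<close> by (intro bounded_UN) auto
  moreover have "range h \<subseteq> (\<Union>p\<in>P. cball (h p) 1)"
  proof (rule image_subsetI)
    fix x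
    obtain p where "p \<in> P" and "\<forall>k\<in>F. \<bar>k x - k p\<bar> < \<delta>"
      using net by blast
    then have "dist (h p) (h x) \<le> 1"
      using F\<delta>[of x p] by (simp add: dist_real_def abs_minus_commute)
    with \<open>p \<in> P\<close> show "h x \<in> (\<Union>p\<in>P. cball (h p) 1)"
      by auto
  qed
  ultimately show ?thesis
    by (rule bounded_subset)
qed

lemma uniform_limit_of_approximations:
  fixes h :: "'a \<Rightarrow> 'b::metric_space"
  assumes "\<And>\<epsilon>. \<epsilon> > 0 \<Longrightarrow> \<exists>g\<in>S. \<forall>x. dist (g x) (h x) \<le> \<epsilon>"
  obtains k where "\<And>n. k n \<in> S" and "uniform_limit UNIV k h sequentially"
proof -
  have "\<forall>n. \<exists>g\<in>S. \<forall>x. dist (g x) (h x) \<le> inverse (real (Suc n))"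
    using assms by simp
  then obtain k where k: "\<And>n. k n \<in> S" "\<And>n x. dist (k n x) (h x) \<le> inverse (real (Suc n))"
    by metis
  show thesis
  proof (rule that[OF k(1)], rule uniform_limitI)
    fix e :: real
    assume "e > 0"
    then have "\<forall>\<^sub>F n in sequentially. inverse (real (Suc n)) < e"
      by (rule order_tendstoD(2)[OF LIMSEQ_inverse_real_of_nat])
    then show "\<forall>\<^sub>F n in sequentially. \<forall>x\<in>UNIV. dist (k n x) (h x) < e"
    proof (rule eventually_mono)
      fix n
      assume "inverse (real (Suc n)) < e"
      with k(2)[of n] show "\<forall>x\<in>UNIV. dist (k n x) (h x) < e"
        by (meson UNIV_I le_less_trans)
    qed
  qed
qed

locale min_affine_closed =
  fixes S :: "('a \<Rightarrow> real) set"
  assumes min_mem: "\<And>k1 k2. k1 \<in> S \<Longrightarrow> k2 \<in> S \<Longrightarrow> (\<lambda>x. min (k1 x) (k2 x)) \<in> S"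
    and add_const_mem: "\<And>r k. k \<in> S \<Longrightarrow> (\<lambda>x. r + k x) \<in> S"
    and scale_mem: "\<And>r k. k \<in> S \<Longrightarrow> (\<lambda>x. r * k x) \<in> S"
begin

lemma max_mem:
  assumes "k1 \<in> S" and "k2 \<in> S"
  shows "(\<lambda>x. max (k1 x) (k2 x)) \<in> S"
proof -
  have "(\<lambda>x. max (k1 x) (k2 x)) = (\<lambda>x. -1 * min (-1 * k1 x) (-1 * k2 x))"
    by (auto simp: fun_eq_iff min_def max_def)
  also have "\<dots> \<in> S"
    using assms by (intro scale_mem min_mem)
  finally show ?thesis .
qed

lemma abs_diff_const_mem:
  assumes "k \<in> S"
  shows "(\<lambda>x. \<bar>k x - c\<bar>) \<in> S"
proof -
  have "(\<lambda>x. \<bar>k x - c\<bar>) = (\<lambda>x. max (- c + k x) (c + -1 * k x))"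
    by (auto simp: fun_eq_iff max_def)
  also have "\<dots> \<in> S"
    using assms by (intro max_mem add_const_mem scale_mem)
  finally show ?thesis .
qed

lemma Min_mem:
  assumes "finite P" and "P \<noteq> {}" and "\<And>p. p \<in> P \<Longrightarrow> G p \<in> S"
  shows "(\<lambda>x. MIN p\<in>P. G p x) \<in> S"
  using assms by (induction P rule: finite_ne_induct) (simp_all add: min_mem)

lemma Max_mem:
  assumes "finite P" and "P \<noteq> {}" and "\<And>p. p \<in> P \<Longrightarrow> G p \<in> S"
  shows "(\<lambda>x. MAX p\<in>P. G p x) \<in> S"
  using assms by (induction P rule: finite_ne_induct) (simp_all add: max_mem)

end

lemma le_cone_at:
  fixes h :: "'a \<Rightarrow> real"
  assumes hB: "\<And>x. \<bar>h x\<bar> \<le> B" and "2 * B \<le> M * \<delta>" and "M \<ge> 0" and "d \<ge> 0" and "e \<ge> 0"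
    and close: "d < \<delta> \<Longrightarrow> \<bar>h x - h p\<bar> < e"
  shows "h x \<le> h p + e + M * d"
proof (cases "d < \<delta>")
  case True
  have "0 \<le> M * d"
    using \<open>M \<ge> 0\<close> \<open>d \<ge> 0\<close> by simp
  with close True show ?thesis
    by linarith
next
  case False
  then have "M * \<delta> \<le> M * d"
    using \<open>M \<ge> 0\<close> by (simp add: mult_left_mono)
  with hB[of x] hB[of p] \<open>2 * B \<le> M * \<delta>\<close> \<open>e \<ge> 0\<close> show ?thesis
    by linarith
qed

lemma Min_cones_approx:
  fixes h :: "'a \<Rightarrow> real" and F :: "('a \<Rightarrow> real) set"
  assumes hB: "\<And>x. \<bar>h x\<bar> \<le> B" and "2 * B \<le> M * \<delta>" and "M \<ge> 0" and "e > 0"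
    and "finite F" and "F \<noteq> {}" and F\<delta>: "\<And>x y. \<forall>k\<in>F. \<bar>k x - k y\<bar> < \<delta> \<Longrightarrow> \<bar>h x - h y\<bar> < e"
    and "finite P" and net: "\<And>x. \<exists>p\<in>P. \<forall>k\<in>F. \<bar>k x - k p\<bar> < min \<delta> (e / (M + 1))"
  shows "h x \<le> (MIN p\<in>P. h p + e + M * (MAX k\<in>F. \<bar>k x - k p\<bar>))"
    and "(MIN p\<in>P. h p + e + M * (MAX k\<in>F. \<bar>k x - k p\<bar>)) \<le> h x + 3 * e"
proof -
  have Max_less_iff: "(MAX k\<in>F. \<bar>k x - k p\<bar>) < t \<longleftrightarrow> (\<forall>k\<in>F. \<bar>k x - k p\<bar> < t)" for p t
    using \<open>finite F\<close> \<open>F \<noteq> {}\<close> by simp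
  have "P \<noteq> {}"
    using net by blast
  have "h x \<le> h p + e + M * (MAX k\<in>F. \<bar>k x - k p\<bar>)" for p
    using \<open>finite F\<close> \<open>F \<noteq> {}\<close> \<open>e > 0\<close>
    by (intro le_cone_at[OF hB \<open>2 * B \<le> M * \<delta>\<close> \<open>M \<ge> 0\<close>]) (auto intro: F\<delta> simp: Max_ge_iff)
  then show "h x \<le> (MIN p\<in>P. h p + e + M * (MAX k\<in>F. \<bar>k x - k p\<bar>))"
    using \<open>finite P\<close> \<open>P \<noteq> {}\<close> by simp
  obtain p where "p \<in> P" and near: "(MAX k\<in>F. \<bar>k x - k p\<bar>) < min \<delta> (e / (M + 1))"
    using net Max_less_iff by blast
  then have "\<bar>h x - h p\<bar> < e"
    using F\<delta> Max_less_iff by simp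
  have "M * (MAX k\<in>F. \<bar>k x - k p\<bar>) \<le> M * (e / (M + 1))"
    using near \<open>M \<ge> 0\<close> by (intro mult_left_mono) auto
  also have "\<dots> \<le> e"
    using \<open>M \<ge> 0\<close> \<open>e > 0\<close> by (simp add: field_simps)
  finally have "h p + e + M * (MAX k\<in>F. \<bar>k x - k p\<bar>) \<le> h x + 3 * e"
    using \<open>\<bar>h x - h p\<bar> < e\<close> by linarith
  moreover have "(MIN q\<in>P. h q + e + M * (MAX k\<in>F. \<bar>k x - k q\<bar>)) \<le> h p + e + M * (MAX k\<in>F. \<bar>k x - k p\<bar>)"
    using \<open>finite P\<close> \<open>p \<in> P\<close> by simp
  ultimately show "(MIN p\<in>P. h p + e + M * (MAX k\<in>F. \<bar>k x - k p\<bar>)) \<le> h x + 3 * e"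
    by linarith
qed

context min_affine_closed
begin

lemma uniform_approx_ucont_wrt_unif_gen:
  assumes bdd: "\<And>k. k \<in> S \<Longrightarrow> bounded (range k)" and "S \<noteq> {}"
    and h: "ucont_wrt (unif_gen S) h" and "\<epsilon> > 0"
  shows "\<exists>g\<in>S. \<forall>x. \<bar>g x - h x\<bar> \<le> \<epsilon>"
proof -
  define e where "e = \<epsilon> / 3"
  have "e > 0"
    using \<open>\<epsilon> > 0\<close> by (simp add: e_def)
  obtain B where "B > 0" and hB: "\<And>x. \<bar>h x\<bar> \<le> B"
    using bounded_range_if_ucont_wrt_unif_gen[OF bdd h] unfolding bounded_pos by auto
  have "\<exists>F\<subseteq>S. finite F \<and> (\<exists>\<delta>>0. \<forall>x y. (\<forall>k\<in>F. \<bar>k x - k y\<bar> < \<delta>) \<longrightarrow> \<bar>h x - h y\<bar> < e)"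
    using h \<open>e > 0\<close> unfolding ucont_wrt_unif_gen_iff by simp
  then obtain F0 \<delta> where "F0 \<subseteq> S" "finite F0" "\<delta> > 0"
    and F0\<delta>: "\<And>x y. \<forall>k\<in>F0. \<bar>k x - k y\<bar> < \<delta> \<Longrightarrow> \<bar>h x - h y\<bar> < e"
    by blast
  obtain k0 where "k0 \<in> S"
    using \<open>S \<noteq> {}\<close> by blast
  \<comment> \<open>\<open>k0\<close> only makes \<open>F\<close> nonempty, so that the maxima over \<open>F\<close> below are not junk values.\<close>
  define F where "F = insert k0 F0"
  have F: "F \<subseteq> S" "finite F" "F \<noteq> {}"
    using \<open>F0 \<subseteq> S\<close> \<open>finite F0\<close> \<open>k0 \<in> S\<close> by (auto simp: F_def)
  have F\<delta>: "\<And>x y. \<forall>k\<in>F. \<bar>k x - k y\<bar> < \<delta> \<Longrightarrow> \<bar>h x - h y\<bar> < e"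
    using F0\<delta> by (simp add: F_def)
  define M where "M = 2 * B / \<delta>"
  have "M \<ge> 0" and "2 * B \<le> M * \<delta>"
    using \<open>B > 0\<close> \<open>\<delta> > 0\<close> by (simp_all add: M_def)
  have "min \<delta> (e / (M + 1)) > 0"
    using \<open>M \<ge> 0\<close> \<open>\<delta> > 0\<close> \<open>e > 0\<close> by simp
  then obtain P where "finite P" and net: "\<And>x. \<exists>p\<in>P. \<forall>k\<in>F. \<bar>k x - k p\<bar> < min \<delta> (e / (M + 1))"
    using exists_finite_net[OF \<open>finite F\<close>] bdd F(1) by blast
  define g where "g x = (MIN p\<in>P. h p + e + M * (MAX k\<in>F. \<bar>k x - k p\<bar>))" for x
  have "P \<noteq> {}"
    using net by blast
  then have "g \<in> S"
    unfolding g_def[abs_def] using F \<open>finite P\<close>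
    by (intro Min_mem Max_mem add_const_mem scale_mem abs_diff_const_mem) auto
  moreover have "\<bar>g x - h x\<bar> \<le> \<epsilon>" for x
  proof -
    note cones = Min_cones_approx[where h = h and F = F and x = x,
        OF hB \<open>2 * B \<le> M * \<delta>\<close> \<open>M \<ge> 0\<close> \<open>e > 0\<close> F(2,3) F\<delta> \<open>finite P\<close> net]
    show ?thesis
      using cones unfolding g_def e_def by linarith
  qed
  ultimately show ?thesis
    by blast
qed

end

theorem mainTheorem12:
  fixes BXX :: "('x \<Rightarrow> 'x) \<Rightarrow> 'bx \<Rightarrow> 'bx"
    and BXR :: "('x \<Rightarrow> real) \<Rightarrow> 'bx \<Rightarrow> 'br"
    and BRX :: "(real \<Rightarrow> 'x) \<Rightarrow> 'br \<Rightarrow> 'bx"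
    and BRR :: "(real \<Rightarrow> real) \<Rightarrow> 'br \<Rightarrow> 'br"
    and \<Lambda> :: "'l set"
    and \<tau> :: "'l \<Rightarrow> 'br \<Rightarrow> real"
    and S :: "('x \<Rightarrow> real) set"
  assumes B_functor: "set_functor2 BXX BXR BRX BRR"
    and bdd_X: "\<And>k l. bounded (range k) \<Longrightarrow> l \<in> \<Lambda> \<Longrightarrow> bounded (range (\<tau> l \<circ> BXR k))"
    and bdd_R: "\<And>k l. bounded (range k) \<Longrightarrow> l \<in> \<Lambda> \<Longrightarrow> bounded (range (\<tau> l \<circ> BRR k))"
    and ulim_X: "\<And>(k :: nat \<Rightarrow> 'x \<Rightarrow> real) h l. uniform_limit UNIV k h sequentially \<Longrightarrow> l \<in> \<Lambda> \<Longrightarrow>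
                   uniform_limit UNIV (\<lambda>i. \<tau> l \<circ> BXR (k i)) (\<tau> l \<circ> BXR h) sequentially"
    and ulim_R: "\<And>(k :: nat \<Rightarrow> real \<Rightarrow> real) h l. uniform_limit UNIV k h sequentially \<Longrightarrow> l \<in> \<Lambda> \<Longrightarrow>
                   uniform_limit UNIV (\<lambda>i. \<tau> l \<circ> BRR (k i)) (\<tau> l \<circ> BRR h) sequentially"
    and S_bdd: "\<And>k. k \<in> S \<Longrightarrow> bounded (range k)"
    and S_one: "(\<lambda>_. 1) \<in> S"
    and S_min: "\<And>k1 k2. k1 \<in> S \<Longrightarrow> k2 \<in> S \<Longrightarrow> (\<lambda>x. min (k1 x) (k2 x)) \<in> S"
    and S_add: "\<And>r k. k \<in> S \<Longrightarrow> (\<lambda>x. r + k x) \<in> S"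
    and S_mult: "\<And>r k. k \<in> S \<Longrightarrow> (\<lambda>x. r * k x) \<in> S"
  shows "\<forall>h. ucont_wrt (unif_gen S) h \<longrightarrow>
           (\<forall>l\<in>\<Lambda>. ucont_wrt (unif_gen {\<tau> l' \<circ> BXR k | k l'. k \<in> S \<and> l' \<in> \<Lambda>}) (\<tau> l \<circ> BXR h))"
proof (intro allI impI ballI)
  fix h l
  assume h: "ucont_wrt (unif_gen S) h" and "l \<in> \<Lambda>"
  interpret min_affine_closed S
    using S_min S_add S_mult by unfold_locales
  have "\<exists>g\<in>S. \<forall>x. dist (g x) (h x) \<le> \<epsilon>" if "\<epsilon> > 0" for \<epsilon>
    using uniform_approx_ucont_wrt_unif_gen[OF S_bdd _ h that] S_one by (auto simp: dist_real_def)
  then obtain k where "\<And>n. k n \<in> S" and "uniform_limit UNIV k h sequentially"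
    using uniform_limit_of_approximations by metis
  then show "ucont_wrt (unif_gen {\<tau> l' \<circ> BXR k | k l'. k \<in> S \<and> l' \<in> \<Lambda>}) (\<tau> l \<circ> BXR h)"
    using \<open>l \<in> \<Lambda>\<close>
    by (intro ucont_wrt_uniform_limit[OF always_eventually ulim_X]) (auto intro: ucont_wrt_unif_gen_mem)
qed

end
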